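(* Let $n,m$ be positive integers. For $\lambda=(\lambda_1,\dots,\lambda_n)\in\mathcal{P}^m_n$ define integers $k_{i,j}(\lambda)$, $1\le i\le j\le n$, recursively (in order of decreasing $i$, and for fixed $i$ in order of decreasing $j$) by $$k_{i,j}(\lambda)=\min\left\{m,\left\lceil\frac{\lambda_i-\sum_{\ell=j+1}^n k_{i,\ell}(\lambda)+\sum_{\ell=i+1}^j k_{\ell,j}(\lambda)}{j-i+1}\right\rceil\right\}.$$ Then the map $\bar\varphi_n:\mathcal{P}^m_n\to\mathcal{T}^m_n$ sending $\lambda$ to the tableau $\{k_{i,j}(\lambda):1\le i\le j\le n\}$ is injective.
   Context: $\mathcal{P}^m_n$ is the set of integer partitions $(\lambda_1\ge\cdots\ge\lambda_n\ge0)$ with $\lambda_i\le m(n-i+1)$ for all $i$. $\mathcal{T}^m_n$ is the set of fillings of the staircase Young diagram of shape $(n,n-1,\dots,1)$ by integers in $\{0,1,\dots,m\}$, where the entry $k_{i,j}$ occupies the box in row $i$, column $n-j+1$ ($1\le i\le j\le n$). *)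

theory Defs
  imports Complex_Main
begin

text \<open>A partition \<lambda> = (\<lambda>_1,...,\<lambda>_n) is a list of length n; \<lambda>_i is lam ! (i - 1).\<close>

definition partP :: "nat \<Rightarrow> nat \<Rightarrow> nat list set" where
  "partP m n = {lam. length lam = n \<and>
      (\<forall>i j. 1 \<le> i \<longrightarrow> i \<le> j \<longrightarrow> j \<le> n \<longrightarrow> lam ! (j - 1) \<le> lam ! (i - 1)) \<and>
      (\<forall>i. 1 \<le> i \<longrightarrow> i \<le> n \<longrightarrow> lam ! (i - 1) \<le> m * (n - i + 1))}"

definition tabT :: "nat \<Rightarrow> nat \<Rightarrow> (nat \<Rightarrow> nat \<Rightarrow> int) set" where
  "tabT m n = {k. (\<forall>i j. 1 \<le> i \<and> i \<le> j \<and> j \<le> n \<longrightarrow> 0 \<le> k i j \<and> k i j \<le> int m) \<and>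
      (\<forall>i j. \<not> (1 \<le> i \<and> i \<le> j \<and> j \<le> n) \<longrightarrow> k i j = 0)}"

function kval :: "nat \<Rightarrow> nat \<Rightarrow> nat list \<Rightarrow> nat \<Rightarrow> nat \<Rightarrow> int" where
  "kval m n lam i j =
     (if 1 \<le> i \<and> i \<le> j \<and> j \<le> n then
        min (int m)
          (\<lceil> real_of_int (int (lam ! (i - 1))
                 - (\<Sum>l\<in>{j+1..n}. kval m n lam i l)
                 + (\<Sum>l\<in>{i+1..j}. kval m n lam l j))
              / real (j - i + 1) \<rceil>)
      else 0)"
  by pat_completeness auto
termination
  by (relation "measures [\<lambda>(m,n,lam,i,j). n + 1 - i, \<lambda>(m,n,lam,i,j). n + 1 - j]") auto

definition phibar :: "nat \<Rightarrow> nat \<Rightarrow> nat list \<Rightarrow> (nat \<Rightarrow> nat \<Rightarrow> int)" where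
  "phibar m n lam = (\<lambda>i j. kval m n lam i j)"

end

theory Submission
  imports Defs
begin

text \<open>Every row of the tableau sums to the corresponding part, \<open>\<Sum>\<^sub>j k(i,j) = \<lambda>\<^sub>i\<close>, so \<open>\<lambda>\<close>
  is recovered from its image. This is proved for the rows from the bottom up. For row \<open>i\<close>,
  the budget \<open>T\<^sub>j = \<lambda>\<^sub>i - \<Sum>\<^bsub>l > j\<^esub> k(i,l)\<close> is what remains of \<open>\<lambda>\<^sub>i\<close> once the entries right of
  column \<open>j\<close> are fixed, and \<open>U\<^sub>j\<close> is the budget of row \<open>i + 1\<close>, which is nonnegative because
  that row has nonnegative entries summing to \<open>\<lambda>\<^bsub>i+1\<^esub>\<close>. Moving leftwards, rounding up in the
  recursion preserves \<open>U\<^sub>j \<le> T\<^sub>j \<le> m (j - i + 1)\<close> (\<open>budget_step\<close>). At the diagonal this gives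
  \<open>0 \<le> T\<^sub>i \<le> m\<close>, so \<open>k(i,i) = T\<^sub>i\<close> and row \<open>i\<close> sums to \<open>\<lambda>\<^sub>i\<close>.\<close>

declare kval.simps[simp del]

lemma ceiling_divide_le_iff:
  assumes "0 < d"
  shows "\<lceil>real_of_int x / real d\<rceil> \<le> q \<longleftrightarrow> x \<le> int d * q"
proof -
  have "\<lceil>real_of_int x / real d\<rceil> \<le> q \<longleftrightarrow> real_of_int x \<le> real d * real_of_int q"
    using assms by (simp add: ceiling_le_iff pos_divide_le_eq mult.commute)
  also have "\<dots> \<longleftrightarrow> x \<le> int d * q"
    by (metis of_int_le_iff of_int_mult of_int_of_nat_eq)
  finally show ?thesis .
qed

lemma le_mult_ceiling_divide: "0 < d \<Longrightarrow> x \<le> int d * \<lceil>real_of_int x / real d\<rceil>"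
  using ceiling_divide_le_iff by blast

lemma ceiling_divide_nonneg: "0 \<le> x \<Longrightarrow> 0 \<le> \<lceil>real_of_int x / real d\<rceil>"
proof -
  assume "0 \<le> x"
  hence "0 \<le> real_of_int x / real d" by simp
  thus ?thesis by linarith
qed

lemma budget_step:
  fixes T U C m q k :: int and d :: nat
  assumes d: "0 < d" and U: "0 \<le> U" "U \<le> T" and T: "T \<le> m * int (d + 1)" and C: "0 \<le> C"
    and q: "q = min m \<lceil>real_of_int (U + C) / real d\<rceil>"
    and k: "k = min m \<lceil>real_of_int (T + (q + C)) / real (d + 1)\<rceil>"
  shows "U - q \<le> T - k \<and> T - k \<le> m * int d"
proof
  have "0 \<le> m * int (d + 1)" using U T by linarith
  hence m: "0 \<le> m" by (simp add: zero_le_mult_iff)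
  have "0 \<le> \<lceil>real_of_int (U + C) / real d\<rceil>" using U C by (intro ceiling_divide_nonneg) simp
  hence q0: "0 \<le> q" using q m by simp
  show "U - q \<le> T - k"
  proof (cases "q = m")
    case True
    have "k \<le> m" using k by simp
    thus ?thesis using True U by linarith
  next
    case False
    hence "q = \<lceil>real_of_int (U + C) / real d\<rceil>"
      using q by (simp add: min_def split: if_splits)
    hence "U + C \<le> int d * q" using le_mult_ceiling_divide[OF d, of "U + C"] by simp
    moreover have "T - U \<le> int d * (T - U) + (T - U)" using U by simp
    ultimately have "T + (q + C) \<le> int (d + 1) * (q + (T - U))" by (simp add: algebra_simps)
    hence "\<lceil>real_of_int (T + (q + C)) / real (d + 1)\<rceil> \<le> q + (T - U)"
      by (subst ceiling_divide_le_iff) auto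
    thus ?thesis using k by linarith
  qed
  show "T - k \<le> m * int d"
  proof (cases "k = m")
    case True thus ?thesis using T by (simp add: algebra_simps)
  next
    case False
    hence "k = \<lceil>real_of_int (T + (q + C)) / real (d + 1)\<rceil>"
      using k by (simp add: min_def split: if_splits)
    hence "T + (q + C) \<le> int (d + 1) * k"
      using le_mult_ceiling_divide[of "d + 1" "T + (q + C)"] by simp
    hence "int (d + 1) * (T - k) \<le> int d * T" using q0 C by (simp add: algebra_simps)
    also have "\<dots> \<le> int d * (m * int (d + 1))" using T by (simp add: mult_left_mono)
    also have "\<dots> = int (d + 1) * (m * int d)" by (simp add: algebra_simps)
    finally show ?thesis by (rule mult_left_le_imp_le) simp
  qed
qed

context
  fixes m n :: nat and lam :: "nat list"
  assumes lam: "lam \<in> partP m n"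
begin

abbreviation k where "k i j \<equiv> kval m n lam i j"
abbreviation part where "part i \<equiv> int (lam ! (i - 1))"

definition budget :: "nat \<Rightarrow> nat \<Rightarrow> int" where
  "budget i j = part i - (\<Sum>l\<in>{j+1..n}. k i l)"

definition valid_row :: "nat \<Rightarrow> bool" where
  "valid_row i \<longleftrightarrow> (\<forall>j. i \<le> j \<and> j \<le> n \<longrightarrow> 0 \<le> k i j \<and> k i j \<le> int m) \<and>
     (\<Sum>l\<in>{i..n}. k i l) = part i"

lemma kval_budget:
  "1 \<le> i \<Longrightarrow> i \<le> j \<Longrightarrow> j \<le> n \<Longrightarrow>
    k i j = min (int m) \<lceil>real_of_int (budget i j + (\<Sum>l\<in>{Suc i..j}. k l j)) / real (j - i + 1)\<rceil>"
  unfolding budget_def by (subst kval.simps) simp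

lemma kval_outside: "\<not> (1 \<le> i \<and> i \<le> j \<and> j \<le> n) \<Longrightarrow> k i j = 0"
  by (subst kval.simps) (rule if_not_P)

lemma part_antimono: "1 \<le> i \<Longrightarrow> i \<le> j \<Longrightarrow> j \<le> n \<Longrightarrow> part j \<le> part i"
  using lam unfolding partP_def by auto

lemma part_le: "1 \<le> i \<Longrightarrow> i \<le> n \<Longrightarrow> part i \<le> int m * int (n - i + 1)"
proof -
  assume "1 \<le> i" "i \<le> n"
  hence "lam ! (i - 1) \<le> m * (n - i + 1)" using lam unfolding partP_def by auto
  hence "int (lam ! (i - 1)) \<le> int (m * (n - i + 1))" by (simp only: of_nat_le_iff)
  thus ?thesis by (simp only: of_nat_mult)
qed

lemma budget_last [simp]: "budget i n = part i"
  by (simp add: budget_def)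

lemma budget_Suc: "j < n \<Longrightarrow> budget i j = budget i (Suc j) - k i (Suc j)"
  by (simp add: budget_def sum.atLeast_Suc_atMost)

lemma valid_row_budget_nonneg:
  assumes "valid_row i" "i \<le> Suc j" "j \<le> n"
  shows "0 \<le> budget i j"
proof -
  have "part i = (\<Sum>l\<in>{i..n}. k i l)" using assms(1) unfolding valid_row_def by simp
  also have "\<dots> = (\<Sum>l\<in>{i..j}. k i l) + (\<Sum>l\<in>{j+1..n}. k i l)"
    using sum.ub_add_nat[of i j _ "n - j"] assms(2,3) by simp
  finally have "part i = (\<Sum>l\<in>{i..j}. k i l) + (\<Sum>l\<in>{j+1..n}. k i l)" .
  moreover have "0 \<le> (\<Sum>l\<in>{i..j}. k i l)"
    using assms unfolding valid_row_def by (intro sum_nonneg) auto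
  ultimately show ?thesis unfolding budget_def by simp
qed

lemma kval_nonneg_below:
  assumes "\<And>l. i < l \<Longrightarrow> l \<le> n \<Longrightarrow> valid_row l" "i < l"
  shows "0 \<le> k l j"
  using assms kval_outside[of l j] unfolding valid_row_def
  by (cases "1 \<le> l \<and> l \<le> j \<and> j \<le> n") auto

lemma budget_invariant:
  assumes i: "1 \<le> i" "i < n" and below: "\<And>l. i < l \<Longrightarrow> l \<le> n \<Longrightarrow> valid_row l"
    and j: "i \<le> j" "j \<le> n"
  shows "budget (Suc i) j \<le> budget i j \<and> budget i j \<le> int m * int (j - i + 1)"
  using j(2,1)
proof (induction j rule: inc_induct)
  case base
  show ?case using part_antimono[of i "Suc i"] part_le[of i] i by simp
next
  case (step j)
  define j' where "j' = Suc j"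
  have j': "i < j'" "j' \<le> n" using step unfolding j'_def by auto
  define C where "C = (\<Sum>l\<in>{Suc (Suc i)..j'}. k l j')"
  have "k (Suc i) j' = min (int m) \<lceil>real_of_int (budget (Suc i) j' + C) / real (j' - i)\<rceil>"
    using kval_budget[of "Suc i" j'] i j' unfolding C_def by simp
  moreover have "k i j' = min (int m)
      \<lceil>real_of_int (budget i j' + (k (Suc i) j' + C)) / real (j' - i + 1)\<rceil>"
    using kval_budget[of i j'] i j' unfolding C_def by (simp add: sum.atLeast_Suc_atMost)
  moreover have "0 \<le> budget (Suc i) j'"
    using valid_row_budget_nonneg below i j' by simp
  moreover have "0 \<le> C" unfolding C_def by (intro sum_nonneg kval_nonneg_below[OF below]) auto
  moreover have "budget (Suc i) j' \<le> budget i j'" "budget i j' \<le> int m * int (j' - i + 1)"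
    using step.IH step.prems unfolding j'_def by auto
  ultimately have "budget (Suc i) j' - k (Suc i) j' \<le> budget i j' - k i j' \<and>
      budget i j' - k i j' \<le> int m * int (j' - i)"
    using j' by (intro budget_step) auto
  moreover have "j' - i = j - i + 1" using step.prems unfolding j'_def by simp
  ultimately show ?case using budget_Suc[of j] step.hyps unfolding j'_def by simp
qed

lemma valid_row_last:
  assumes "1 \<le> n"
  shows "valid_row n"
proof -
  have "k n n = min (int m) \<lceil>real_of_int (part n)\<rceil>" using kval_budget[of n n] assms by simp
  hence "k n n = part n" using part_le[of n] assms by simp
  thus ?thesis using part_le[of n] assms unfolding valid_row_def by auto
qed

lemma valid_row_above:
  assumes i: "1 \<le> i" "i < n" and below: "\<And>l. i < l \<Longrightarrow> l \<le> n \<Longrightarrow> valid_row l"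
  shows "valid_row i"
proof -
  have budget_nonneg: "0 \<le> budget i j" if "i \<le> j" "j \<le> n" for j
  proof -
    have "0 \<le> budget (Suc i) j"
      using valid_row_budget_nonneg[of "Suc i" j] below[of "Suc i"] i that by simp
    thus ?thesis using budget_invariant[OF i below that] by linarith
  qed
  have "0 \<le> k i j \<and> k i j \<le> int m" if "i \<le> j" "j \<le> n" for j
  proof -
    have "0 \<le> (\<Sum>l\<in>{Suc i..j}. k l j)" by (intro sum_nonneg kval_nonneg_below[OF below]) auto
    hence "0 \<le> \<lceil>real_of_int (budget i j + (\<Sum>l\<in>{Suc i..j}. k l j)) / real (j - i + 1)\<rceil>"
      using budget_nonneg[OF that] by (intro ceiling_divide_nonneg) simp
    thus ?thesis using kval_budget[of i j] i that by simp
  qed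
  moreover have "budget i i \<le> int m"
    using budget_invariant[OF i below, of i] i by simp
  hence "k i i = budget i i" using kval_budget[of i i] budget_nonneg[of i] i by simp
  hence "(\<Sum>l\<in>{i..n}. k i l) = part i"
    using i by (simp add: sum.atLeast_Suc_atMost budget_def)
  ultimately show ?thesis unfolding valid_row_def by blast
qed

lemma valid_rows: "1 \<le> i \<Longrightarrow> i \<le> n \<Longrightarrow> valid_row i"
proof (induction "n - i" arbitrary: i rule: less_induct)
  case less
  show ?case
  proof (cases "i = n")
    case True
    hence "1 \<le> n" using less.prems(1) by simp
    thus ?thesis unfolding True by (rule valid_row_last)
  next
    case False
    show ?thesis
    proof (rule valid_row_above)
      show "1 \<le> i" "i < n" using False less.prems by auto
      show "valid_row l" if "i < l" "l \<le> n" for l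
        using less.hyps[of l] less.prems that by simp
    qed
  qed
qed

lemma kval_bounds: "0 \<le> k i j \<and> k i j \<le> int m"
  using valid_rows[of i] kval_outside[of i j] unfolding valid_row_def
  by (cases "1 \<le> i \<and> i \<le> j \<and> j \<le> n") auto

lemma sum_kval_row: "1 \<le> i \<Longrightarrow> i \<le> n \<Longrightarrow> (\<Sum>l\<in>{i..n}. k i l) = part i"
  using valid_rows unfolding valid_row_def by blast

end

theorem theorem4p2:
  fixes m n :: nat
  assumes "0 < n" and "0 < m"
  shows "phibar m n ` partP m n \<subseteq> tabT m n \<and> inj_on (phibar m n) (partP m n)"
proof
  show "phibar m n ` partP m n \<subseteq> tabT m n"
    using kval_bounds kval_outside unfolding tabT_def phibar_def by blast
  show "inj_on (phibar m n) (partP m n)"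
  proof (rule inj_onI)
    fix a b assume a: "a \<in> partP m n" and b: "b \<in> partP m n" and "phibar m n a = phibar m n b"
    hence k_eq: "kval m n a = kval m n b" unfolding phibar_def by simp
    show "a = b"
    proof (rule nth_equalityI)
      show "length a = length b" using a b unfolding partP_def by simp
      fix p assume "p < length a"
      hence "1 \<le> Suc p" "Suc p \<le> n" using a unfolding partP_def by auto
      thus "a ! p = b ! p" using sum_kval_row[OF a] sum_kval_row[OF b] k_eq by fastforce
    qed
  qed
qed

end
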